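(* Let $\delta\in(0,1)$, $t\ge0$ and $\boldsymbol{x}\in\mathcal{X}$. Then, with probability at least $1-\delta$ (with respect to $f_t$ distributed as the Gaussian process posterior), $$|p_{t,\boldsymbol{x}}-\mu_t^{(p)}(\boldsymbol{x})|<\delta^{-1/2}\gamma_t(\boldsymbol{x}).$$
   Context: $\mathcal{D}\subset\mathbb{R}^d$ is compact, $\mathcal{X}\subset\mathcal{D}$ finite, $h\in\mathbb{R}$ a threshold, and for each $\boldsymbol{x}\in\mathcal{X}$, $g(\cdot\mid\boldsymbol{\theta}_{\boldsymbol{x}})$ is a probability density on $\mathcal{D}$. An unknown $f:\mathcal{D}\to\mathbb{R}$ has Gaussian process prior $\mathcal{GP}(0,k)$ and, after observing data $\{(\boldsymbol{s}_j,y_j)\}_{j=1}^t$ with $y_j=f(\boldsymbol{s}_j)+$ independent $\mathcal{N}(0,\sigma^2)$ noise, $f_t$ denotes a random function distributed according to the GP posterior, with posterior mean $\mu_t$ and variance $\sigma_t^2$. Define $p_{t,\boldsymbol{x}}=\int_{\mathcal{D}}\mathbf{1}[f_t(\boldsymbol{s})<h]\,g(\boldsymbol{s}\mid\boldsymbol{\theta}_{\boldsymbol{x}})\,d\boldsymbol{s}$, $\Phi_{\boldsymbol{s}}=\Phi((h-\mu_t(\boldsymbol{s}))/\sigma_t(\boldsymbol{s}))$ with $\Phi$ the standard normal cdf, $\mu_t^{(p)}(\boldsymbol{x})=\mathbb{E}[p_{t,\boldsymbol{x}}]=\int_{\mathcal{D}}\Phi_{\boldsymbol{s}}\,g(\boldsymbol{s}\mid\boldsymbol{\theta}_{\boldsymbol{x}})d\boldsymbol{s}$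 and $\gamma_t^2(\boldsymbol{x})=\int_{\mathcal{D}}\mathrm{Var}[\mathbf{1}[f_t(\boldsymbol{s})<h]]\,g(\boldsymbol{s}\mid\boldsymbol{\theta}_{\boldsymbol{x}})d\boldsymbol{s}=\int_{\mathcal{D}}\Phi_{\boldsymbol{s}}(1-\Phi_{\boldsymbol{s}})\,g(\boldsymbol{s}\mid\boldsymbol{\theta}_{\boldsymbol{x}})d\boldsymbol{s}$. *)

theory Defs
  imports "HOL-Probability.Probability"
begin

definition Phi :: "real \<Rightarrow> real" where
  "Phi z = measure (density lborel (\<lambda>x. ennreal (std_normal_density x))) {..z}"

definition psd_kernel :: "'a set \<Rightarrow> ('a \<Rightarrow> 'a \<Rightarrow> real) \<Rightarrow> bool" where
  "psd_kernel D k \<longleftrightarrow> (\<forall>s\<in>D. \<forall>s'\<in>D. k s s' = k s' s) \<and>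
     (\<forall>ss cs. set ss \<subseteq> D \<longrightarrow> length cs = length ss \<longrightarrow>
        0 \<le> (\<Sum>i<length ss. \<Sum>j<length ss. cs!i * cs!j * k (ss!i) (ss!j)))"

text \<open>The vector a = (K + noise * I)^{-1} v, with K the Gram matrix of the data points ss.\<close>
definition gp_solve :: "('a \<Rightarrow> 'a \<Rightarrow> real) \<Rightarrow> real \<Rightarrow> 'a list \<Rightarrow> (nat \<Rightarrow> real) \<Rightarrow> nat \<Rightarrow> real" where
  "gp_solve k noise ss v = (THE a. (\<forall>j\<ge>length ss. a j = 0) \<and>
     (\<forall>i<length ss. (\<Sum>j<length ss. (k (ss!i) (ss!j) + (if i = j then noise else 0)) * a j) = v i))"

definition post_mean :: "('a \<Rightarrow> 'a \<Rightarrow> real) \<Rightarrow> real \<Rightarrow> 'a list \<Rightarrow> real list \<Rightarrow> 'a \<Rightarrow> real" where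
  "post_mean k noise ss ys s = (\<Sum>i<length ss. k s (ss!i) * gp_solve k noise ss (\<lambda>i. ys!i) i)"

definition post_cov :: "('a \<Rightarrow> 'a \<Rightarrow> real) \<Rightarrow> real \<Rightarrow> 'a list \<Rightarrow> 'a \<Rightarrow> 'a \<Rightarrow> real" where
  "post_cov k noise ss s s' = k s s' - (\<Sum>i<length ss. k s (ss!i) * gp_solve k noise ss (\<lambda>i. k (ss!i) s') i)"

definition gaussian_rv :: "'w measure \<Rightarrow> ('w \<Rightarrow> real) \<Rightarrow> real \<Rightarrow> real \<Rightarrow> bool" where
  "gaussian_rv M X m v \<longleftrightarrow> X \<in> borel_measurable M \<and>
     (if v = 0 then (AE \<omega> in M. X \<omega> = m)
      else 0 < v \<and> distributed M lborel X (\<lambda>x. ennreal (normal_density m (sqrt v) x)))"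

definition gaussian_process :: "'w measure \<Rightarrow> 'a set \<Rightarrow> ('w \<Rightarrow> 'a \<Rightarrow> real) \<Rightarrow> ('a \<Rightarrow> real) \<Rightarrow> ('a \<Rightarrow> 'a \<Rightarrow> real) \<Rightarrow> bool" where
  "gaussian_process M D F m C \<longleftrightarrow> prob_space M \<and>
     (\<forall>ss cs. set ss \<subseteq> D \<longrightarrow> length cs = length ss \<longrightarrow>
        gaussian_rv M (\<lambda>\<omega>. \<Sum>i<length ss. cs!i * F \<omega> (ss!i))
          (\<Sum>i<length ss. cs!i * m (ss!i))
          (\<Sum>i<length ss. \<Sum>j<length ss. cs!i * cs!j * C (ss!i) (ss!j)))"

end

(*
  Write p(x) - mu_p(x) as the g-weighted average of the centred indicators
  1[f_t(s) < h] - P(f_t(s) < h).  By Jensen's inequality for the probability density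
  g(. | x) and Tonelli, its second moment is at most the g-average of the variances of
  these indicators, which is gamma_t(x)^2 because f_t(s) ~ N(mu_t(s), sigma_t(s)^2) gives
  P(f_t(s) < h) = Phi_s.  Chebyshev's inequality finishes the proof; the bound is strict
  because 0 < Phi_s < 1 forces gamma_t(x) > 0.
*)
theory Submission
  imports Defs
begin

lemma integrable_bounded_mult:
  fixes a G :: "'a \<Rightarrow> real"
  assumes G: "integrable N G" and a[measurable]: "a \<in> borel_measurable N"
    and "\<And>s. s \<in> space N \<Longrightarrow> \<bar>a s\<bar> \<le> B"
  shows "integrable N (\<lambda>s. a s * G s)"
proof (rule Bochner_Integration.integrable_bound)
  show "integrable N (\<lambda>s. B * G s)" using G by simp
  show "(\<lambda>s. a s * G s) \<in> borel_measurable N" using borel_measurable_integrable[OF G] by measurable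
  show "AE s in N. norm (a s * G s) \<le> norm (B * G s)"
  proof (intro AE_I2)
    fix s assume "s \<in> space N"
    then have "\<bar>a s\<bar> \<le> \<bar>B\<bar>" using assms(3)[of s] by fastforce
    then show "norm (a s * G s) \<le> norm (B * G s)" by (simp add: abs_mult mult_right_mono)
  qed
qed

lemma square_integral_le_integral_square:
  fixes a G :: "'a \<Rightarrow> real"
  assumes G: "integrable N G" "\<And>s. 0 \<le> G s" "integral\<^sup>L N G = 1"
    and "integrable N (\<lambda>s. a s * G s)" "integrable N (\<lambda>s. (a s)\<^sup>2 * G s)"
  shows "(\<integral>s. a s * G s \<partial>N)\<^sup>2 \<le> (\<integral>s. (a s)\<^sup>2 * G s \<partial>N)"
proof -
  define m where "m = (\<integral>s. a s * G s \<partial>N)"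
  have "0 \<le> (\<integral>s. (a s - m)\<^sup>2 * G s \<partial>N)"
    using G(2) by (intro integral_nonneg_AE AE_I2) simp
  also have "\<dots> = (\<integral>s. (a s)\<^sup>2 * G s - 2 * m * (a s * G s) + m\<^sup>2 * G s \<partial>N)"
    by (rule Bochner_Integration.integral_cong) (auto simp: power2_eq_square algebra_simps)
  also have "\<dots> = (\<integral>s. (a s)\<^sup>2 * G s \<partial>N) - m\<^sup>2"
    using assms by (simp add: m_def[symmetric] power2_eq_square)
  finally show ?thesis by (simp add: m_def)
qed

lemma integral_mult_density_pos:
  fixes w G :: "'a \<Rightarrow> real"
  assumes "integrable N (\<lambda>s. w s * G s)" and "\<And>s. s \<in> space N \<Longrightarrow> 0 \<le> G s"
    and "integral\<^sup>L N G \<noteq> 0" and "\<And>s. s \<in> space N \<Longrightarrow> G s \<noteq> 0 \<Longrightarrow> 0 < w s"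
  shows "0 < (\<integral>s. w s * G s \<partial>N)"
proof -
  have nonneg: "s \<in> space N \<Longrightarrow> 0 \<le> w s * G s" for s
    using assms(2,4)[of s] by (cases "G s = 0") auto
  have "(\<integral>s. w s * G s \<partial>N) \<noteq> 0"
  proof
    assume "(\<integral>s. w s * G s \<partial>N) = 0"
    then have "AE s in N. w s * G s = 0"
      using assms(1) nonneg by (simp add: integral_nonneg_eq_0_iff_AE)
    then have "AE s in N. G s = 0"
    proof (rule AE_mp, intro AE_I2 impI)
      fix s assume "s \<in> space N" "w s * G s = 0"
      then show "G s = 0" using assms(4)[of s] by (cases "G s = 0") auto
    qed
    then show False
      using assms(3) integral_eq_zero_AE by blast
  qed
  moreover have "0 \<le> (\<integral>s. w s * G s \<partial>N)"
    using nonneg by (intro integral_nonneg_AE AE_I2)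
  ultimately show ?thesis by simp
qed

lemma (in prob_space) second_moment_weighted_average_le:
  fixes Z :: "'a \<Rightarrow> 'b \<Rightarrow> real" and G :: "'b \<Rightarrow> real"
  assumes "sigma_finite_measure N"
    and Z[measurable]: "(\<lambda>(\<omega>, s). Z \<omega> s) \<in> borel_measurable (M \<Otimes>\<^sub>M N)"
    and Z_bounded: "\<And>\<omega> s. \<bar>Z \<omega> s\<bar> \<le> B"
    and G: "integrable N G" "\<And>s. 0 \<le> G s" "integral\<^sup>L N G = 1"
  defines "Y \<equiv> \<lambda>\<omega>. \<integral>s. (Z \<omega> s - expectation (\<lambda>\<omega>. Z \<omega> s)) * G s \<partial>N"
  shows "random_variable borel Y" and "integrable M (\<lambda>\<omega>. (Y \<omega>)\<^sup>2)"
    and "integrable N (\<lambda>s. variance (\<lambda>\<omega>. Z \<omega> s) * G s)"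
    and "expectation (\<lambda>\<omega>. (Y \<omega>)\<^sup>2) \<le> (\<integral>s. variance (\<lambda>\<omega>. Z \<omega> s) * G s \<partial>N)"
proof -
  interpret N: sigma_finite_measure N by fact
  interpret P: pair_sigma_finite M N ..
  have [measurable]: "G \<in> borel_measurable N" using G(1) by (rule borel_measurable_integrable)
  define q where "q s = expectation (\<lambda>\<omega>. Z \<omega> s)" for s
  have Zs: "integrable M (\<lambda>\<omega>. Z \<omega> s)" if "s \<in> space N" for s
    using Z_bounded that by (intro integrable_const_bound[where B=B]) auto
  have "\<bar>q s\<bar> \<le> B" if "s \<in> space N" for s
    unfolding q_def using Z_bounded Zs[OF that]
    by (intro order_trans[OF integral_abs_bound] integral_le_const) auto
  then have dev_abs: "\<bar>Z \<omega> s - q s\<bar> \<le> 2 * B" if "s \<in> space N" for \<omega> s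
    using Z_bounded[of \<omega> s] that by fastforce
  then have dev_bounded: "(Z \<omega> s - q s)\<^sup>2 \<le> (2 * B)\<^sup>2" if "s \<in> space N" for \<omega> s
    using power_mono[OF dev_abs[OF that] abs_ge_zero, where n=2] by simp
  have [measurable]: "q \<in> borel_measurable N" unfolding q_def by measurable
  have dev_integrable: "integrable N (\<lambda>s. (Z \<omega> s - q s)\<^sup>2 * G s)" if "\<omega> \<in> space M" for \<omega>
    using that dev_bounded by (intro integrable_bounded_mult[OF G(1), where B="(2 * B)\<^sup>2"]) auto
  have Y_jensen: "(Y \<omega>)\<^sup>2 \<le> (\<integral>s. (Z \<omega> s - q s)\<^sup>2 * G s \<partial>N)" if "\<omega> \<in> space M" for \<omega>
  proof -
    have "integrable N (\<lambda>s. (Z \<omega> s - q s) * G s)"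
      using that dev_abs by (intro integrable_bounded_mult[OF G(1), where B="2 * B"]) auto
    then show ?thesis
      unfolding Y_def q_def[symmetric]
      by (rule square_integral_le_integral_square[OF G]) (rule dev_integrable[OF that])
  qed
  show Y[measurable]: "random_variable borel Y" unfolding Y_def by measurable
  show Y2: "integrable M (\<lambda>\<omega>. (Y \<omega>)\<^sup>2)"
  proof (rule integrable_const_bound[where B="(2 * B)\<^sup>2"])
    show "AE \<omega> in M. norm ((Y \<omega>)\<^sup>2) \<le> (2 * B)\<^sup>2"
    proof (intro AE_I2)
      fix \<omega> assume \<omega>: "\<omega> \<in> space M"
      have "(\<integral>s. (Z \<omega> s - q s)\<^sup>2 * G s \<partial>N) \<le> (\<integral>s. (2 * B)\<^sup>2 * G s \<partial>N)"
        using \<omega> dev_integrable G dev_bounded by (intro integral_mono) (auto intro: mult_right_mono)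
      then show "norm ((Y \<omega>)\<^sup>2) \<le> (2 * B)\<^sup>2" using Y_jensen[OF \<omega>] G(3) by simp
    qed
  qed measurable
  have dev_sq_integrable: "integrable M (\<lambda>\<omega>. (Z \<omega> s - q s)\<^sup>2)" if "s \<in> space N" for s
    using dev_bounded[OF that] that by (intro integrable_const_bound[where B="(2 * B)\<^sup>2"]) auto
  have inner: "(\<integral>\<^sup>+\<omega>. ennreal ((Z \<omega> s - q s)\<^sup>2 * G s) \<partial>M) = ennreal (variance (\<lambda>\<omega>. Z \<omega> s) * G s)"
    if "s \<in> space N" for s
    using dev_sq_integrable[OF that] G(2) by (subst nn_integral_eq_integral) (auto simp: q_def)
  have "variance (\<lambda>\<omega>. Z \<omega> s) \<le> (2 * B)\<^sup>2" if "s \<in> space N" for s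
    using dev_sq_integrable[OF that] dev_bounded[OF that] by (intro integral_le_const) (auto simp: q_def)
  then show var_integrable: "integrable N (\<lambda>s. variance (\<lambda>\<omega>. Z \<omega> s) * G s)"
    by (intro integrable_bounded_mult[OF G(1), where B="(2 * B)\<^sup>2"]) auto
  have "ennreal (expectation (\<lambda>\<omega>. (Y \<omega>)\<^sup>2)) = (\<integral>\<^sup>+\<omega>. ennreal ((Y \<omega>)\<^sup>2) \<partial>M)"
    using Y2 by (simp add: nn_integral_eq_integral)
  also have "\<dots> \<le> (\<integral>\<^sup>+\<omega>. \<integral>\<^sup>+s. ennreal ((Z \<omega> s - q s)\<^sup>2 * G s) \<partial>N \<partial>M)"
    using Y_jensen dev_integrable G(2)
    by (intro nn_integral_mono) (simp add: nn_integral_eq_integral ennreal_leI)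
  also have "\<dots> = (\<integral>\<^sup>+s. \<integral>\<^sup>+\<omega>. ennreal ((Z \<omega> s - q s)\<^sup>2 * G s) \<partial>M \<partial>N)"
    by (rule P.Fubini'[symmetric]) measurable
  also have "\<dots> = ennreal (\<integral>s. variance (\<lambda>\<omega>. Z \<omega> s) * G s \<partial>N)"
    using var_integrable G(2) by (simp add: inner nn_integral_eq_integral cong: nn_integral_cong)
  finally show "expectation (\<lambda>\<omega>. (Y \<omega>)\<^sup>2) \<le> (\<integral>s. variance (\<lambda>\<omega>. Z \<omega> s) * G s \<partial>N)"
    using G(2) by (simp add: ennreal_le_iff integral_nonneg_AE)
qed

lemma (in prob_space) expectation_of_bool:
  assumes "{\<omega>\<in>space M. P \<omega>} \<in> events"
  shows "expectation (\<lambda>\<omega>. of_bool (P \<omega>) :: real) = prob {\<omega>\<in>space M. P \<omega>}"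
proof -
  have "(\<lambda>\<omega>. of_bool (P \<omega>) :: real) = indicator {\<omega>. P \<omega>}"
    by (simp add: fun_eq_iff indicator_def)
  then have "expectation (\<lambda>\<omega>. of_bool (P \<omega>) :: real) = prob ({\<omega>. P \<omega>} \<inter> space M)"
    by simp
  also have "{\<omega>. P \<omega>} \<inter> space M = {\<omega>\<in>space M. P \<omega>}" by auto
  finally show ?thesis .
qed

lemma (in prob_space) variance_of_bool:
  assumes "{\<omega>\<in>space M. P \<omega>} \<in> events"
  shows "variance (\<lambda>\<omega>. of_bool (P \<omega>) :: real) = prob {\<omega>\<in>space M. P \<omega>} * (1 - prob {\<omega>\<in>space M. P \<omega>})"
proof -
  let ?X = "\<lambda>\<omega>. of_bool (P \<omega>) :: real" and ?p = "prob {\<omega>\<in>space M. P \<omega>}"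
  have "integrable M ?X"
    using assms by (intro integrable_const_bound[where B=1]) (auto simp: pred_def)
  have "variance ?X = expectation (\<lambda>\<omega>. ?X \<omega> * (1 - 2 * ?p) + ?p\<^sup>2)"
    using assms by (intro Bochner_Integration.integral_cong)
      (auto simp: expectation_of_bool power2_eq_square algebra_simps)
  also have "\<dots> = ?p * (1 - 2 * ?p) + ?p\<^sup>2"
    using \<open>integrable M ?X\<close> assms by (simp add: expectation_of_bool prob_space)
  finally show ?thesis by (simp add: power2_eq_square algebra_simps)
qed

lemma (in prob_space) Chebyshev_prob_abs_less:
  assumes [measurable]: "random_variable borel Y" and "integrable M (\<lambda>\<omega>. (Y \<omega>)\<^sup>2)"
    and "expectation (\<lambda>\<omega>. (Y \<omega>)\<^sup>2) \<le> V" and "0 < V" and "0 < \<delta>"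
  shows "1 - \<delta> \<le> prob {\<omega>\<in>space M. \<bar>Y \<omega>\<bar> < sqrt (V / \<delta>)}"
proof -
  define c where "c = V / \<delta>"
  have "0 < c" using assms(4,5) by (simp add: c_def)
  have "prob {\<omega>\<in>space M. c \<le> (Y \<omega>)\<^sup>2} \<le> expectation (\<lambda>\<omega>. (Y \<omega>)\<^sup>2) / c"
    by (rule integral_Markov_inequality_measure[OF assms(2) sets.empty_sets _ \<open>0 < c\<close>]) simp
  also have "\<dots> \<le> V / c"
    using assms(3) \<open>0 < c\<close> by (simp add: divide_right_mono)
  also have "V / c = \<delta>"
    using assms(4,5) by (simp add: c_def)
  finally have "prob {\<omega>\<in>space M. c \<le> (Y \<omega>)\<^sup>2} \<le> \<delta>" .
  moreover have "\<bar>y\<bar> < sqrt c \<longleftrightarrow> y\<^sup>2 < c" for y :: real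
    using real_sqrt_less_iff[of "y\<^sup>2" c] by simp
  then have "{\<omega>\<in>space M. \<bar>Y \<omega>\<bar> < sqrt c} = space M - {\<omega>\<in>space M. c \<le> (Y \<omega>)\<^sup>2}"
    by (auto simp: not_le)
  ultimately show ?thesis
    by (simp add: prob_compl c_def)
qed

lemma (in prob_space) sublevel_average_concentration:
  fixes F :: "'a \<Rightarrow> 'b \<Rightarrow> real" and G :: "'b \<Rightarrow> real" and h :: real
  assumes "sigma_finite_measure N"
    and F[measurable]: "(\<lambda>(\<omega>, s). F \<omega> s) \<in> borel_measurable (M \<Otimes>\<^sub>M N)"
    and G: "integrable N G" "\<And>s. 0 \<le> G s" "integral\<^sup>L N G = 1"
  defines "P \<equiv> \<lambda>s. prob {\<omega>\<in>space M. F \<omega> s < h}"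
  assumes nondegenerate: "\<And>s. s \<in> space N \<Longrightarrow> G s \<noteq> 0 \<Longrightarrow> 0 < P s \<and> P s < 1"
    and "0 < \<delta>"
  shows "1 - \<delta> \<le> prob {\<omega>\<in>space M.
           \<bar>(\<integral>s. of_bool (F \<omega> s < h) * G s \<partial>N) - (\<integral>s. P s * G s \<partial>N)\<bar>
             < sqrt ((\<integral>s. P s * (1 - P s) * G s \<partial>N) / \<delta>)}"
proof -
  interpret N: sigma_finite_measure N by fact
  define Z where "Z \<omega> s = (of_bool (F \<omega> s < h) :: real)" for \<omega> s
  have Z[measurable]: "(\<lambda>(\<omega>, s). Z \<omega> s) \<in> borel_measurable (M \<Otimes>\<^sub>M N)"
    unfolding Z_def by measurable
  have [measurable]: "G \<in> borel_measurable N" using G(1) by (rule borel_measurable_integrable)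
  have event: "{\<omega>\<in>space M. F \<omega> s < h} \<in> events" if "s \<in> space N" for s
    using that by measurable
  have EZ: "expectation (\<lambda>\<omega>. Z \<omega> s) = P s" if "s \<in> space N" for s
    unfolding Z_def P_def using event[OF that] by (rule expectation_of_bool)
  have VZ: "variance (\<lambda>\<omega>. Z \<omega> s) = P s * (1 - P s)" if "s \<in> space N" for s
    unfolding Z_def P_def using event[OF that] by (rule variance_of_bool)
  define Y where "Y \<omega> = (\<integral>s. (Z \<omega> s - expectation (\<lambda>\<omega>. Z \<omega> s)) * G s \<partial>N)" for \<omega>
  define V where "V = (\<integral>s. P s * (1 - P s) * G s \<partial>N)"
  have "\<bar>Z \<omega> s\<bar> \<le> 1" for \<omega> s by (simp add: Z_def)
  note moments = second_moment_weighted_average_le[OF \<open>sigma_finite_measure N\<close> Z this G,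
      folded Y_def]
  have V_eq: "(\<integral>s. variance (\<lambda>\<omega>. Z \<omega> s) * G s \<partial>N) = V"
    unfolding V_def by (intro Bochner_Integration.integral_cong) (simp_all add: VZ)
  have "0 < V"
  proof -
    have "integrable N (\<lambda>s. variance (\<lambda>\<omega>. Z \<omega> s) * G s) = integrable N (\<lambda>s. P s * (1 - P s) * G s)"
      by (rule Bochner_Integration.integrable_cong[OF refl]) (simp add: VZ)
    then have "integrable N (\<lambda>s. P s * (1 - P s) * G s)"
      using moments(3) by simp
    then show ?thesis
      unfolding V_def using G nondegenerate
      by (intro integral_mult_density_pos[where w="\<lambda>s. P s * (1 - P s)"]) auto
  qed
  have Y_eq: "Y \<omega> = (\<integral>s. Z \<omega> s * G s \<partial>N) - (\<integral>s. P s * G s \<partial>N)" if "\<omega> \<in> space M" for \<omega>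
  proof -
    have "integrable N (\<lambda>s. Z \<omega> s * G s)" "integrable N (\<lambda>s. expectation (\<lambda>\<omega>. Z \<omega> s) * G s)"
      using that EZ G(1)
      by (auto intro!: integrable_bounded_mult[where B=1] simp: Z_def P_def prob_le_1)
    then have "Y \<omega> = (\<integral>s. Z \<omega> s * G s \<partial>N) - (\<integral>s. expectation (\<lambda>\<omega>. Z \<omega> s) * G s \<partial>N)"
      unfolding Y_def left_diff_distrib by (rule Bochner_Integration.integral_diff)
    also have "(\<integral>s. expectation (\<lambda>\<omega>. Z \<omega> s) * G s \<partial>N) = (\<integral>s. P s * G s \<partial>N)"
      by (intro Bochner_Integration.integral_cong) (simp_all add: EZ)
    finally show ?thesis .
  qed
  have "1 - \<delta> \<le> prob {\<omega>\<in>space M. \<bar>Y \<omega>\<bar> < sqrt (V / \<delta>)}"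
    using moments(1,2,4) V_eq \<open>0 < V\<close> \<open>0 < \<delta>\<close> by (intro Chebyshev_prob_abs_less) simp_all
  also have "{\<omega>\<in>space M. \<bar>Y \<omega>\<bar> < sqrt (V / \<delta>)} = {\<omega>\<in>space M.
      \<bar>(\<integral>s. of_bool (F \<omega> s < h) * G s \<partial>N) - (\<integral>s. P s * G s \<partial>N)\<bar> < sqrt (V / \<delta>)}"
    using Y_eq by (auto simp: Z_def)
  finally show ?thesis unfolding V_def .
qed

abbreviation std_normal_measure :: "real measure" where
  "std_normal_measure \<equiv> density lborel (\<lambda>x. ennreal (std_normal_density x))"

lemma prob_space_std_normal_measure: "prob_space std_normal_measure"
  by (rule prob_space_normal_density) simp

lemma measure_std_normal_pos:
  assumes A: "A \<in> sets borel" and "{a..b} \<subseteq> A" and "a < b"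
  shows "0 < measure std_normal_measure A"
proof -
  interpret N: prob_space std_normal_measure by (rule prob_space_std_normal_measure)
  have "emeasure std_normal_measure A \<noteq> 0"
  proof
    assume "emeasure std_normal_measure A = 0"
    then have "AE x in lborel. ennreal (std_normal_density x) * indicator A x = 0"
      using A by (simp add: emeasure_density nn_integral_0_iff_AE)
    then have "AE x in lborel. x \<notin> A"
      by (rule AE_mp) (auto intro!: AE_I2 simp: indicator_def
          normal_density_pos[of 1 0, simplified, THEN less_imp_neq, THEN not_sym])
    then have "A \<in> null_sets lborel"
      using A by (simp add: AE_iff_null)
    then have "{a..b} \<in> null_sets lborel"
      using \<open>{a..b} \<subseteq> A\<close> by (auto intro: null_sets_subset)
    then show False
      using \<open>a < b\<close> by (simp add: null_sets_def)
  qed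
  then show ?thesis
    by (simp add: N.emeasure_eq_measure zero_less_measure_iff)
qed

lemma Phi_gt_0: "0 < Phi z"
  unfolding Phi_def by (rule measure_std_normal_pos[of _ "z - 1" z]) auto

lemma Phi_less_1: "Phi z < 1"
proof -
  interpret N: prob_space std_normal_measure by (rule prob_space_std_normal_measure)
  have "{..z} = space std_normal_measure - {z<..}" by auto
  then have "Phi z = 1 - measure std_normal_measure {z<..}"
    unfolding Phi_def using N.prob_compl[of "{z<..}"] by simp
  moreover have "0 < measure std_normal_measure {z<..}"
    by (rule measure_std_normal_pos[of _ "z + 1" "z + 2"]) auto
  ultimately show ?thesis by simp
qed

lemma (in prob_space) prob_less_normal_eq_Phi:
  assumes X: "distributed M lborel X (\<lambda>x. ennreal (normal_density m \<sigma> x))" and "0 < \<sigma>"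
  shows "prob {\<omega>\<in>space M. X \<omega> < h} = Phi ((h - m) / \<sigma>)"
proof -
  interpret N: prob_space std_normal_measure by (rule prob_space_std_normal_measure)
  let ?Z = "\<lambda>\<omega>. (X \<omega> - m) / \<sigma>" and ?z = "(h - m) / \<sigma>"
  have Z: "distributed M lborel ?Z (\<lambda>x. ennreal (std_normal_density x))"
    using normal_standard_normal_convert[OF \<open>0 < \<sigma>\<close>] X by simp
  have "{\<omega>\<in>space M. X \<omega> < h} = ?Z -` {..<?z} \<inter> space M"
    using \<open>0 < \<sigma>\<close> by (auto simp: divide_simps)
  then have "prob {\<omega>\<in>space M. X \<omega> < h} = measure (distr M lborel ?Z) {..<?z}"
    using measure_distr[OF distributed_measurable[OF Z], of "{..<?z}"] by simp
  also have "\<dots> = measure std_normal_measure {..<?z}"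
    using Z by (simp add: distributed_distr_eq_density)
  also have "\<dots> = measure std_normal_measure {..?z}"
  proof -
    have "measure std_normal_measure {?z} = 0"
      by (simp add: emeasure_density measure_def)
    moreover have "{..?z} = {..<?z} \<union> {?z}" by auto
    ultimately show ?thesis
      using N.finite_measure_Union[of "{..<?z}" "{?z}"] by simp
  qed
  finally show ?thesis unfolding Phi_def .
qed

lemma gaussian_process_prob_less:
  assumes "gaussian_process M D F m C" and "s \<in> D" and "0 < C s s"
  shows "prob_space.prob M {\<omega>\<in>space M. F \<omega> s < h} = Phi ((h - m s) / sqrt (C s s))"
proof -
  interpret prob_space M using assms(1) by (simp add: gaussian_process_def)
  have "gaussian_rv M (\<lambda>\<omega>. F \<omega> s) (m s) (C s s)"
    using assms(1,2) unfolding gaussian_process_def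
    by (auto dest!: spec[of _ "[s]"] spec[of _ "[1]"])
  then have "distributed M lborel (\<lambda>\<omega>. F \<omega> s) (\<lambda>x. ennreal (normal_density (m s) (sqrt (C s s)) x))"
    using \<open>0 < C s s\<close> by (simp add: gaussian_rv_def)
  then show ?thesis
    by (rule prob_less_normal_eq_Phi) (simp add: \<open>0 < C s s\<close>)
qed

lemma powr_minus_half_mult_sqrt:
  fixes \<delta> V :: real
  assumes "0 < \<delta>"
  shows "\<delta> powr (-1/2) * sqrt V = sqrt (V / \<delta>)"
proof -
  have "\<delta> powr (-1/2) = inverse (\<delta> powr (1/2))"
    by (simp add: powr_minus[symmetric])
  also have "\<dots> = inverse (sqrt \<delta>)"
    using assms by (simp add: powr_half_sqrt)
  finally show ?thesis
    by (simp add: real_sqrt_divide field_simps)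
qed

theorem lemma1:
  fixes M :: "'w measure"
    and D :: "'a::euclidean_space set"
    and X :: "'a set"
    and h :: real
    and g :: "'a \<Rightarrow> 'a \<Rightarrow> real"
    and k :: "'a \<Rightarrow> 'a \<Rightarrow> real"
    and noise :: real
    and ss :: "'a list" and ys :: "real list"
    and f :: "'w \<Rightarrow> 'a \<Rightarrow> real"
    and \<delta> :: real and x :: 'a
  defines "t \<equiv> length ss"
  defines "\<mu> \<equiv> post_mean k noise ss ys"
  defines "\<sigma> \<equiv> \<lambda>s. sqrt (post_cov k noise ss s s)"
  defines "PhiS \<equiv> \<lambda>s. Phi ((h - \<mu> s) / \<sigma> s)"
  defines "p \<equiv> \<lambda>\<omega> x. (LINT s:D|lborel. indicator {s. f \<omega> s < h} s * g x s)"
  defines "\<mu>p \<equiv> \<lambda>x. (LINT s:D|lborel. PhiS s * g x s)"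
  defines "\<gamma> \<equiv> \<lambda>x. sqrt (LINT s:D|lborel. PhiS s * (1 - PhiS s) * g x s)"
  assumes "compact D"
    and "finite X" and "X \<subseteq> D"
    and "\<And>x. x \<in> X \<Longrightarrow> g x \<in> borel_measurable lborel \<and> (\<forall>s. 0 \<le> g x s)
           \<and> set_integrable lborel D (g x) \<and> (LINT s:D|lborel. g x s) = 1"
    and "psd_kernel D k"
    and "0 < noise"
    and "set ss \<subseteq> D" and "length ys = length ss"
    and "\<And>s. s \<in> D \<Longrightarrow> 0 < post_cov k noise ss s s"
    and "gaussian_process M D f \<mu> (post_cov k noise ss)"
    and "(\<lambda>(\<omega>, s). f \<omega> s) \<in> borel_measurable (M \<Otimes>\<^sub>M lborel)"
    and "0 < \<delta>" and "\<delta> < 1"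
    and "x \<in> X"
  shows "prob_space.prob M {\<omega> \<in> space M. \<bar>p \<omega> x - \<mu>p x\<bar> < \<delta> powr (-1/2) * \<gamma> x} \<ge> 1 - \<delta>"
proof -
  \<comment> \<open>Only the one-point marginals of the process enter.\<close>
  note \<sigma>_def = \<open>\<sigma> \<equiv> \<lambda>s. sqrt (post_cov k noise ss s s)\<close>
  note PhiS_def = \<open>PhiS \<equiv> \<lambda>s. Phi ((h - \<mu> s) / \<sigma> s)\<close>
  note p_def = \<open>p \<equiv> \<lambda>\<omega> x. (LINT s:D|lborel. indicator {s. f \<omega> s < h} s * g x s)\<close>
  note \<mu>p_def = \<open>\<mu>p \<equiv> \<lambda>x. (LINT s:D|lborel. PhiS s * g x s)\<close>
  note \<gamma>_def = \<open>\<gamma> \<equiv> \<lambda>x. sqrt (LINT s:D|lborel. PhiS s * (1 - PhiS s) * g x s)\<close>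
  interpret M: prob_space M
    using \<open>gaussian_process M D f \<mu> (post_cov k noise ss)\<close> by (simp add: gaussian_process_def)
  have gx: "\<And>s. 0 \<le> g x s" "set_integrable lborel D (g x)" "(LINT s:D|lborel. g x s) = 1"
    using assms(11) \<open>x \<in> X\<close> by auto
  define G where "G s = indicator D s * g x s" for s
  have G: "integrable lborel G" "\<And>s. 0 \<le> G s" "integral\<^sup>L lborel G = 1"
    using gx unfolding G_def set_integrable_def set_lebesgue_integral_def by (auto simp: mult.commute)
  define P where "P s = M.prob {\<omega>\<in>space M. f \<omega> s < h}" for s
  have P_eq: "P s = PhiS s" if "s \<in> D" for s
    unfolding P_def PhiS_def \<sigma>_def
    using gaussian_process_prob_less[OF \<open>gaussian_process M D f \<mu> (post_cov k noise ss)\<close> that]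
      \<open>\<And>s. s \<in> D \<Longrightarrow> 0 < post_cov k noise ss s s\<close>[OF that] by simp
  have "p \<omega> x = (\<integral>s. of_bool (f \<omega> s < h) * G s \<partial>lborel)" for \<omega>
    unfolding p_def set_lebesgue_integral_def G_def
    by (intro Bochner_Integration.integral_cong) (simp_all add: indicator_def of_bool_def)
  moreover have "\<mu>p x = (\<integral>s. P s * G s \<partial>lborel)"
    unfolding \<mu>p_def set_lebesgue_integral_def G_def
    by (intro Bochner_Integration.integral_cong) (simp_all add: indicator_def of_bool_def P_eq)
  moreover have "\<gamma> x = sqrt (\<integral>s. P s * (1 - P s) * G s \<partial>lborel)"
    unfolding \<gamma>_def set_lebesgue_integral_def G_def
    by (intro arg_cong[where f=sqrt] Bochner_Integration.integral_cong)
      (simp_all add: indicator_def of_bool_def P_eq)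
  moreover have "1 - \<delta> \<le> M.prob {\<omega>\<in>space M.
      \<bar>(\<integral>s. of_bool (f \<omega> s < h) * G s \<partial>lborel) - (\<integral>s. P s * G s \<partial>lborel)\<bar>
        < sqrt ((\<integral>s. P s * (1 - P s) * G s \<partial>lborel) / \<delta>)}"
    unfolding P_def
  proof (rule M.sublevel_average_concentration[OF lborel.sigma_finite_measure_axioms _ G])
    show "(\<lambda>(\<omega>, s). f \<omega> s) \<in> borel_measurable (M \<Otimes>\<^sub>M lborel)" by fact
    show "0 < \<delta>" by fact
    fix s assume "G s \<noteq> 0"
    then have "s \<in> D" by (cases "s \<in> D") (simp_all add: G_def)
    then show "0 < M.prob {\<omega>\<in>space M. f \<omega> s < h} \<and> M.prob {\<omega>\<in>space M. f \<omega> s < h} < 1"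
      using P_eq[of s] by (simp add: P_def PhiS_def Phi_gt_0 Phi_less_1)
  qed
  ultimately show ?thesis
    using powr_minus_half_mult_sqrt[OF \<open>0 < \<delta>\<close>] by simp
qed

end
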